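(* Let $G$ be an additive group, $K$ a field, $\widehat G$ a subgroup of finite index $n$ with cosets $G_0=\widehat G,G_1,\dots,G_{n-1}$. For any $t\in\widehat G$, any $f\in F^{per}_{t,\widehat G}$ and any $t'\in G_i$ ($1\le i\le n-1$) there exists $g\in F^{per}_{t',\widehat G}$ such that $L(f,t)\cong L(g,t')$.
   Context: $L(f,t)$ is the $K$-algebra with basis $\{e_a:a\in G\}$ and multiplication $e_ae_b=f(a,b)e_{a+b+t}$. A function $f:G\times G\to K$ is $\widehat G$-periodic if $f(a,b)$ depends only on the cosets of $\widehat G$ containing $a$ and $b$. $F^{per}_{t,\widehat G}$ is the set of $\widehat G$-periodic $f$ satisfying, for all $a,b,c\in G$, $$f(b,c)f(a,b+c+t)=f(a,b)f(a+b+t,c)-f(a,c)f(a+c+t,b)$$ (equivalently, $L(f,t)$ satisfies the right Leibniz identity $x(yz)=(xy)z-(xz)y$). *)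

theory Defs
  imports Main
begin

definition add_subgroup :: "'a::ab_group_add set \<Rightarrow> bool" where
  "add_subgroup H \<longleftrightarrow> 0 \<in> H \<and> (\<forall>a\<in>H. \<forall>b\<in>H. a + b \<in> H) \<and> (\<forall>a\<in>H. - a \<in> H)"

definition cosets :: "'a::ab_group_add set \<Rightarrow> 'a set set" where
  "cosets H = {(\<lambda>h. a + h) ` H | a. True}"

definition periodic :: "'a::ab_group_add set \<Rightarrow> ('a \<Rightarrow> 'a \<Rightarrow> 'k) \<Rightarrow> bool" where
  "periodic H f \<longleftrightarrow> (\<forall>a b a' b'. a - a' \<in> H \<longrightarrow> b - b' \<in> H \<longrightarrow> f a b = f a' b')"

definition leibniz_cond :: "('a::ab_group_add \<Rightarrow> 'a \<Rightarrow> 'k::field) \<Rightarrow> 'a \<Rightarrow> bool" where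
  "leibniz_cond f t \<longleftrightarrow> (\<forall>a b c.
     f b c * f a (b + c + t) = f a b * f (a + b + t) c - f a c * f (a + c + t) b)"

definition F_per :: "'a::ab_group_add \<Rightarrow> 'a set \<Rightarrow> ('a \<Rightarrow> 'a \<Rightarrow> 'k::field) set" where
  "F_per t H = {f. periodic H f \<and> leibniz_cond f t}"

text \<open>Elements of L(f,t): finitely supported functions G \<Rightarrow> K (coefficients w.r.t. the basis e_a).\<close>
definition fsupp :: "('a \<Rightarrow> 'k::zero) \<Rightarrow> bool" where
  "fsupp x \<longleftrightarrow> finite {a. x a \<noteq> 0}"

text \<open>Multiplication of L(f,t): bilinear extension of e_a e_b = f(a,b) e_(a+b+t).\<close>
definition Lmult :: "('a::ab_group_add \<Rightarrow> 'a \<Rightarrow> 'k::field) \<Rightarrow> 'a \<Rightarrow> ('a \<Rightarrow> 'k) \<Rightarrow> ('a \<Rightarrow> 'k) \<Rightarrow> ('a \<Rightarrow> 'k)" where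
  "Lmult f t x y = (\<lambda>c. \<Sum>p \<in> {a. x a \<noteq> 0} \<times> {b. y b \<noteq> 0}.
      if fst p + snd p + t = c then x (fst p) * y (snd p) * f (fst p) (snd p) else 0)"

definition L_iso :: "('a::ab_group_add \<Rightarrow> 'a \<Rightarrow> 'k::field) \<Rightarrow> 'a \<Rightarrow> ('a \<Rightarrow> 'a \<Rightarrow> 'k) \<Rightarrow> 'a \<Rightarrow> bool" where
  "L_iso f t g t' \<longleftrightarrow> (\<exists>\<phi> :: ('a \<Rightarrow> 'k) \<Rightarrow> ('a \<Rightarrow> 'k).
      bij_betw \<phi> {x. fsupp x} {x. fsupp x}
    \<and> (\<forall>x y. fsupp x \<longrightarrow> fsupp y \<longrightarrow> \<phi> (\<lambda>a. x a + y a) = (\<lambda>a. \<phi> x a + \<phi> y a))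
    \<and> (\<forall>k x. fsupp x \<longrightarrow> \<phi> (\<lambda>a. k * x a) = (\<lambda>a. k * \<phi> x a))
    \<and> (\<forall>x y. fsupp x \<longrightarrow> fsupp y \<longrightarrow> \<phi> (Lmult f t x y) = Lmult g t' (\<phi> x) (\<phi> y)))"

end

theory Submission
  imports Defs
begin

(* Put s = t - t'.  Translating every basis vector by s,
   e_a \<mapsto> e_(a+s), transports the multiplication e_a e_b = f(a,b) e_(a+b+t)
   of L(f,t) to the multiplication e_a e_b = g(a,b) e_(a+b+t') with
   g(a,b) = f(a-s, b-s).  The translated structure function g is again
   periodic (for any subgroup, indeed any set H) and satisfies the Leibniz
   identity for t' = t - s, so g \<in> F_per t' H and the translation is the
   required algebra isomorphism.  The argument works for arbitrary t, t' and s;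
   the hypotheses on the coset of t' only locate the theorem in the paper. *)

text \<open>Translation by s of a coefficient vector: the vector sum x_a e_a is sent
  to sum x_a e_(a+s).\<close>
definition shift_vec :: "'a::ab_group_add \<Rightarrow> ('a \<Rightarrow> 'k) \<Rightarrow> ('a \<Rightarrow> 'k)" where
  "shift_vec s x = (\<lambda>a. x (a - s))"

definition shift_struct :: "'a::ab_group_add \<Rightarrow> ('a \<Rightarrow> 'a \<Rightarrow> 'k) \<Rightarrow> ('a \<Rightarrow> 'a \<Rightarrow> 'k)" where
  "shift_struct s f = (\<lambda>a b. f (a - s) (b - s))"

lemma periodic_shift_struct:
  assumes "periodic H f"
  shows "periodic H (shift_struct s f)"
  using assms unfolding periodic_def shift_struct_def
  by (metis diff_diff_eq2 diff_add_cancel add_diff_cancel_right')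

text \<open>The Leibniz identity for (f,t) becomes the Leibniz identity for the
  translated function with parameter t - s, since (a-s)+(b-s)+t = a+b+(t-s)-s.\<close>
lemma leibniz_cond_shift_struct:
  assumes "leibniz_cond f t"
  shows "leibniz_cond (shift_struct s f) (t - s)"
  unfolding leibniz_cond_def shift_struct_def
proof (intro allI)
  fix a b c
  have sum_shift: "u + v + (t - s) - s = (u - s) + (v - s) + t" for u v
    by (simp add: algebra_simps)
  show "f (b - s) (c - s) * f (a - s) (b + c + (t - s) - s) =
        f (a - s) (b - s) * f (a + b + (t - s) - s) (c - s)
      - f (a - s) (c - s) * f (a + c + (t - s) - s) (b - s)"
    unfolding sum_shift using assms unfolding leibniz_cond_def by blast
qed

lemma F_per_shift_struct:
  assumes "f \<in> F_per t H"
  shows "shift_struct s f \<in> F_per (t - s) H"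
  using assms periodic_shift_struct leibniz_cond_shift_struct
  by (auto simp: F_per_def)

lemma fsupp_shift_vec:
  assumes "fsupp x"
  shows "fsupp (shift_vec s x)"
proof -
  have "{a. x (a - s) \<noteq> 0} = (\<lambda>a. a + s) ` {a. x a \<noteq> 0}"
    by (auto simp: image_iff intro!: exI[of _ "_ - s"])
  thus ?thesis using assms unfolding fsupp_def shift_vec_def by simp
qed

lemma bij_shift_vec: "bij_betw (shift_vec s) {x. fsupp x} {x. fsupp x}"
proof (rule bij_betw_byWitness[where f' = "shift_vec (- s)"])
  show "\<forall>x\<in>{x. fsupp x}. shift_vec (- s) (shift_vec s x) = x"
    and "\<forall>x\<in>{x. fsupp x}. shift_vec s (shift_vec (- s) x) = x"
    by (simp_all add: shift_vec_def)
  show "shift_vec s ` {x. fsupp x} \<subseteq> {x. fsupp x}"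
    and "shift_vec (- s) ` {x. fsupp x} \<subseteq> {x. fsupp x}"
    by (auto simp: fsupp_shift_vec)
qed

text \<open>Translation intertwines the products: reindexing the defining sum of
  Lmult by (a,b) \<mapsto> (a+s, b+s) turns one product into the other.\<close>
lemma Lmult_shift_vec:
  "shift_vec s (Lmult f t x y) =
   Lmult (shift_struct s f) (t - s) (shift_vec s x) (shift_vec s y)"
proof
  fix c
  have target: "(u + s + (v + s) + (t - s) = c) = (u + v + t = c - s)" for u v
    by (auto simp: algebra_simps)
  have "Lmult (shift_struct s f) (t - s) (shift_vec s x) (shift_vec s y) c =
    (\<Sum>p \<in> {a. x (a - s) \<noteq> 0} \<times> {b. y (b - s) \<noteq> 0}.
      if fst p + snd p + (t - s) = c
      then x (fst p - s) * y (snd p - s) * f (fst p - s) (snd p - s) else 0)"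
    by (simp add: Lmult_def shift_vec_def shift_struct_def)
  also have "\<dots> = (\<Sum>p \<in> {a. x a \<noteq> 0} \<times> {b. y b \<noteq> 0}.
      if fst p + snd p + t = c - s then x (fst p) * y (snd p) * f (fst p) (snd p) else 0)"
    by (rule sum.reindex_bij_witness[where i = "\<lambda>p. (fst p + s, snd p + s)"
          and j = "\<lambda>p. (fst p - s, snd p - s)"]) (auto simp: target)
  also have "\<dots> = shift_vec s (Lmult f t x y) c"
    by (simp add: Lmult_def shift_vec_def)
  finally show "shift_vec s (Lmult f t x y) c =
    Lmult (shift_struct s f) (t - s) (shift_vec s x) (shift_vec s y) c" by simp
qed

lemma L_iso_shift_struct: "L_iso f t (shift_struct s f) (t - s)"
  unfolding L_iso_def
  by (rule exI[of _ "shift_vec s"])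
     (simp add: bij_shift_vec Lmult_shift_vec[unfolded shift_vec_def] shift_vec_def)

theorem proposition4p3:
  fixes H :: "'a::ab_group_add set" and t t' :: 'a and f :: "'a \<Rightarrow> 'a \<Rightarrow> 'k::field"
  assumes "add_subgroup H"
    and "finite (cosets H)"
    and "t \<in> H"
    and "f \<in> F_per t H"
    and "t' \<notin> H"
  shows "\<exists>g \<in> F_per t' H. L_iso f t g t'"
proof -
  define s where "s = t - t'"
  have t': "t' = t - s" by (simp add: s_def)
  have "shift_struct s f \<in> F_per t' H"
    unfolding t' using assms(4) by (rule F_per_shift_struct)
  moreover have "L_iso f t (shift_struct s f) t'"
    unfolding t' by (rule L_iso_shift_struct)
  ultimately show ?thesis by blast
qed

end
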